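(* Let $\mathbf I=\langle I,\vee\rangle$ be a join-semilattice with order $\preceq$ (strict part $\prec$), let $\mathbf A_p=\langle A_p,\le_p,\cdot_p,\backslash_p,/_p,1_p\rangle$ ($p\in I$) be pairwise disjoint residuated monoids, and for $p\preceq q$ let $\varphi_{pq},\psi_{pq}:A_p\to A_q$ be monotone maps such that: $\varphi_{pp}=\psi_{pp}=\mathrm{id}_{A_p}$; $\varphi_{qr}\varphi_{pq}=\varphi_{pr}$ and $\psi_{qr}\psi_{pq}=\psi_{pr}$ for $p\preceq q\preceq r$; and for all $a,b\in A_p$: $\varphi_{pq}(1_p)=1_q$, $\varphi_{pq}(a\cdot_pb)=\varphi_{pq}(a)\cdot_q\varphi_{pq}(b)$, $\psi_{pq}(a\backslash_pb)=\varphi_{pq}(a)\backslash_q\psi_{pq}(b)$, $\psi_{pq}(a/_pb)=\psi_{pq}(a)/_q\varphi_{pq}(b)$. Assume (S1): if $p\prec q$, $p\prec r$, $t=q\vee r$, then $\varphi_{qt}(\psi_{pq}(a))\le_t\psi_{rt}(\varphi_{pr}(a))$ for all $a\in A_p$; and (S2): if $p\prec q$, $a,b\in A_p$ and $\varphi_{pq}(a)\le_q\psi_{pq}(b)$, then $a<_pb$. Define $\mathbf A$ on $A:=\biguplus_pA_p$ by, for $a\in A_p$, $b\in A_q$, $r:=p\vee q$: $ab:=\varphi_{pr}(a)\cdot_r\varphi_{qr}(b)$, $a\backslash b:=\varphi_{pr}(a)\backslash_r\psi_{qr}(b)$, $a/b:=\psi_{pr}(a)/_r\varphi_{qr}(b)$,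 and $a\le b\iff\varphi_{pr}(a)\le_r\psi_{qr}(b)$. Then: (1) $\mathbf A=\langle A,\le,\cdot,\backslash,/\rangle$ is a residuated semigroup; if $\mathbf I$ has a least element $\bot$, then $1_\bot$ is a global identity of $\mathbf A$; (2) $I':=\{1_p: p\in I\}$ consists of central positive idempotents of $\mathbf A$, $1_p1_q=1_{p\vee q}$, so $I'$ is closed under multiplication and $p\mapsto1_p$ is an isomorphism $\mathbf I\cong\langle I',\cdot\rangle$; (3) $\mathbf A$ is steady over $\langle I',\cdot\rangle$, with $u_a=1_p$ for $a\in A_p$; (4) if every $\mathbf A_p$ is balanced, then $\mathbf A$ is balanced; (5) if every $\mathbf A_p$ is integrally closed, then $I'$ is exactly the set of central positive idempotents of $\mathbf A$; (6) if every $\mathbf A_p$ is integral, then $\mathbf A$ satisfies $xx\le x$.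
   Context: A residuated semigroup is a structure $\langle A,\le,\cdot,\backslash,/\rangle$ where $\langle A,\le\rangle$ is a poset, $\langle A,\cdot\rangle$ is a semigroup, and $xy\le z\iff x\le z/y\iff y\le x\backslash z$; a residuated monoid additionally has a global identity $1$. An element $p$ is positive if $a\le pa$ and $a\le ap$ for all $a$, idempotent if $pp=p$, central if $pa=ap$ for all $a$. For a nonempty set $I'$ of central positive idempotents closed under multiplication, $\mathbf A$ is balanced over $\langle I',\cdot\rangle$ if for every $a$ the element $u_a:=\max\{p\in I': pa=a\}$ exists, and steady over it if moreover $u_{ab}=u_{a/b}=u_{b\backslash a}=u_au_b$ for all $a,b$. A residuated semigroup is balanced if it satisfies $x\backslash x=x/x$ and all elements $a\backslash a$, $a/a$ are positive. A residuated monoid is integrally closed if $x\backslash x=1$ for all $x$, and integral if $x\le1$ for all $x$. *)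

theory Defs
  imports Main
begin

definition residuated_semigroup ::
  "'a set \<Rightarrow> ('a \<Rightarrow> 'a \<Rightarrow> bool) \<Rightarrow> ('a \<Rightarrow> 'a \<Rightarrow> 'a) \<Rightarrow> ('a \<Rightarrow> 'a \<Rightarrow> 'a) \<Rightarrow> ('a \<Rightarrow> 'a \<Rightarrow> 'a) \<Rightarrow> bool" where
  "residuated_semigroup A le mul ld rd \<longleftrightarrow>
     (\<forall>x\<in>A. le x x) \<and>
     (\<forall>x\<in>A. \<forall>y\<in>A. le x y \<and> le y x \<longrightarrow> x = y) \<and>
     (\<forall>x\<in>A. \<forall>y\<in>A. \<forall>z\<in>A. le x y \<and> le y z \<longrightarrow> le x z) \<and>
     (\<forall>x\<in>A. \<forall>y\<in>A. mul x y \<in> A \<and> ld x y \<in> A \<and> rd x y \<in> A) \<and>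
     (\<forall>x\<in>A. \<forall>y\<in>A. \<forall>z\<in>A. mul (mul x y) z = mul x (mul y z)) \<and>
     (\<forall>x\<in>A. \<forall>y\<in>A. \<forall>z\<in>A.
        (le (mul x y) z \<longleftrightarrow> le x (rd z y)) \<and> (le (mul x y) z \<longleftrightarrow> le y (ld x z)))"

definition global_identity :: "'a set \<Rightarrow> ('a \<Rightarrow> 'a \<Rightarrow> 'a) \<Rightarrow> 'a \<Rightarrow> bool" where
  "global_identity A mul e \<longleftrightarrow> e \<in> A \<and> (\<forall>x\<in>A. mul e x = x \<and> mul x e = x)"

definition residuated_monoid ::
  "'a set \<Rightarrow> ('a \<Rightarrow> 'a \<Rightarrow> bool) \<Rightarrow> ('a \<Rightarrow> 'a \<Rightarrow> 'a) \<Rightarrow> ('a \<Rightarrow> 'a \<Rightarrow> 'a) \<Rightarrow> ('a \<Rightarrow> 'a \<Rightarrow> 'a) \<Rightarrow> 'a \<Rightarrow> bool" where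
  "residuated_monoid A le mul ld rd e \<longleftrightarrow>
     residuated_semigroup A le mul ld rd \<and> global_identity A mul e"

definition positive_el :: "'a set \<Rightarrow> ('a \<Rightarrow> 'a \<Rightarrow> bool) \<Rightarrow> ('a \<Rightarrow> 'a \<Rightarrow> 'a) \<Rightarrow> 'a \<Rightarrow> bool" where
  "positive_el A le mul p \<longleftrightarrow> (\<forall>a\<in>A. le a (mul p a) \<and> le a (mul a p))"

definition idempotent_el :: "('a \<Rightarrow> 'a \<Rightarrow> 'a) \<Rightarrow> 'a \<Rightarrow> bool" where
  "idempotent_el mul p \<longleftrightarrow> mul p p = p"

definition central_el :: "'a set \<Rightarrow> ('a \<Rightarrow> 'a \<Rightarrow> 'a) \<Rightarrow> 'a \<Rightarrow> bool" where
  "central_el A mul p \<longleftrightarrow> (\<forall>a\<in>A. mul p a = mul a p)"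

definition cpi_el :: "'a set \<Rightarrow> ('a \<Rightarrow> 'a \<Rightarrow> bool) \<Rightarrow> ('a \<Rightarrow> 'a \<Rightarrow> 'a) \<Rightarrow> 'a \<Rightarrow> bool" where
  "cpi_el A le mul p \<longleftrightarrow> p \<in> A \<and> central_el A mul p \<and> positive_el A le mul p \<and> idempotent_el mul p"

definition cpi_set :: "'a set \<Rightarrow> ('a \<Rightarrow> 'a \<Rightarrow> bool) \<Rightarrow> ('a \<Rightarrow> 'a \<Rightarrow> 'a) \<Rightarrow> 'a set \<Rightarrow> bool" where
  "cpi_set A le mul I' \<longleftrightarrow> I' \<noteq> {} \<and> (\<forall>p\<in>I'. cpi_el A le mul p) \<and>
     (\<forall>p\<in>I'. \<forall>q\<in>I'. mul p q \<in> I')"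

definition is_u :: "('a \<Rightarrow> 'a \<Rightarrow> bool) \<Rightarrow> ('a \<Rightarrow> 'a \<Rightarrow> 'a) \<Rightarrow> 'a set \<Rightarrow> 'a \<Rightarrow> 'a \<Rightarrow> bool" where
  "is_u le mul I' a p \<longleftrightarrow> p \<in> I' \<and> mul p a = a \<and> (\<forall>q\<in>I'. mul q a = a \<longrightarrow> le q p)"

definition u_el :: "('a \<Rightarrow> 'a \<Rightarrow> bool) \<Rightarrow> ('a \<Rightarrow> 'a \<Rightarrow> 'a) \<Rightarrow> 'a set \<Rightarrow> 'a \<Rightarrow> 'a" where
  "u_el le mul I' a = (THE p. is_u le mul I' a p)"

definition balanced_over :: "'a set \<Rightarrow> ('a \<Rightarrow> 'a \<Rightarrow> bool) \<Rightarrow> ('a \<Rightarrow> 'a \<Rightarrow> 'a) \<Rightarrow> 'a set \<Rightarrow> bool" where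
  "balanced_over A le mul I' \<longleftrightarrow> cpi_set A le mul I' \<and> (\<forall>a\<in>A. \<exists>p. is_u le mul I' a p)"

definition steady_over ::
  "'a set \<Rightarrow> ('a \<Rightarrow> 'a \<Rightarrow> bool) \<Rightarrow> ('a \<Rightarrow> 'a \<Rightarrow> 'a) \<Rightarrow> ('a \<Rightarrow> 'a \<Rightarrow> 'a) \<Rightarrow> ('a \<Rightarrow> 'a \<Rightarrow> 'a) \<Rightarrow> 'a set \<Rightarrow> bool" where
  "steady_over A le mul ld rd I' \<longleftrightarrow> balanced_over A le mul I' \<and>
     (\<forall>a\<in>A. \<forall>b\<in>A.
        u_el le mul I' (mul a b) = mul (u_el le mul I' a) (u_el le mul I' b) \<and>
        u_el le mul I' (rd a b) = mul (u_el le mul I' a) (u_el le mul I' b) \<and>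
        u_el le mul I' (ld b a) = mul (u_el le mul I' a) (u_el le mul I' b))"

definition balanced_rs ::
  "'a set \<Rightarrow> ('a \<Rightarrow> 'a \<Rightarrow> bool) \<Rightarrow> ('a \<Rightarrow> 'a \<Rightarrow> 'a) \<Rightarrow> ('a \<Rightarrow> 'a \<Rightarrow> 'a) \<Rightarrow> ('a \<Rightarrow> 'a \<Rightarrow> 'a) \<Rightarrow> bool" where
  "balanced_rs A le mul ld rd \<longleftrightarrow>
     (\<forall>x\<in>A. ld x x = rd x x \<and> positive_el A le mul (ld x x) \<and> positive_el A le mul (rd x x))"

definition integrally_closed :: "'a set \<Rightarrow> ('a \<Rightarrow> 'a \<Rightarrow> 'a) \<Rightarrow> 'a \<Rightarrow> bool" where
  "integrally_closed A ld e \<longleftrightarrow> (\<forall>x\<in>A. ld x x = e)"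

definition integral :: "'a set \<Rightarrow> ('a \<Rightarrow> 'a \<Rightarrow> bool) \<Rightarrow> 'a \<Rightarrow> bool" where
  "integral A le e \<longleftrightarrow> (\<forall>x\<in>A. le x e)"

section \<open>The construction on the disjoint union (tagged pairs (p,a) with a in A_p)\<close>

definition sum_mul ::
  "('i::semilattice_sup \<Rightarrow> 'i \<Rightarrow> 'a \<Rightarrow> 'a) \<Rightarrow> ('i \<Rightarrow> 'a \<Rightarrow> 'a \<Rightarrow> 'a) \<Rightarrow> 'i \<times> 'a \<Rightarrow> 'i \<times> 'a \<Rightarrow> 'i \<times> 'a" where
  "sum_mul phi mul x y = (let r = sup (fst x) (fst y) in
     (r, mul r (phi (fst x) r (snd x)) (phi (fst y) r (snd y))))"

definition sum_ld ::
  "('i::semilattice_sup \<Rightarrow> 'i \<Rightarrow> 'a \<Rightarrow> 'a) \<Rightarrow> ('i \<Rightarrow> 'i \<Rightarrow> 'a \<Rightarrow> 'a) \<Rightarrow> ('i \<Rightarrow> 'a \<Rightarrow> 'a \<Rightarrow> 'a) \<Rightarrow> 'i \<times> 'a \<Rightarrow> 'i \<times> 'a \<Rightarrow> 'i \<times> 'a" where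
  "sum_ld phi psi ld x y = (let r = sup (fst x) (fst y) in
     (r, ld r (phi (fst x) r (snd x)) (psi (fst y) r (snd y))))"

definition sum_rd ::
  "('i::semilattice_sup \<Rightarrow> 'i \<Rightarrow> 'a \<Rightarrow> 'a) \<Rightarrow> ('i \<Rightarrow> 'i \<Rightarrow> 'a \<Rightarrow> 'a) \<Rightarrow> ('i \<Rightarrow> 'a \<Rightarrow> 'a \<Rightarrow> 'a) \<Rightarrow> 'i \<times> 'a \<Rightarrow> 'i \<times> 'a \<Rightarrow> 'i \<times> 'a" where
  "sum_rd phi psi rd x y = (let r = sup (fst x) (fst y) in
     (r, rd r (psi (fst x) r (snd x)) (phi (fst y) r (snd y))))"

definition sum_le ::
  "('i::semilattice_sup \<Rightarrow> 'i \<Rightarrow> 'a \<Rightarrow> 'a) \<Rightarrow> ('i \<Rightarrow> 'i \<Rightarrow> 'a \<Rightarrow> 'a) \<Rightarrow> ('i \<Rightarrow> 'a \<Rightarrow> 'a \<Rightarrow> bool) \<Rightarrow> 'i \<times> 'a \<Rightarrow> 'i \<times> 'a \<Rightarrow> bool" where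
  "sum_le phi psi le x y = (let r = sup (fst x) (fst y) in
     le r (phi (fst x) r (snd x)) (psi (fst y) r (snd y)))"

end

theory Submission
  imports Defs
begin

(* The hypotheses make every comparison between tagged elements checkable in a single
   component: by (S2), a \<le>_r b follows from \<phi>_rt(a) \<le>_t \<psi>_rt(b) for r \<preceq> t, and (S1) lets the
   witnesses of x \<le> y and y \<le> z be transported to the join of their levels, where they
   compose; (S1) also gives \<psi>_pq \<le> \<phi>_pq, so by (S2) x \<le> y \<le> x forces x and y into the same
   component. Products and residuals of tagged elements all live at the join of the tags and
   are compatible with \<phi> and \<psi>, so associativity and residuation reduce to those of that
   component. Finally 1_p fixes every element of a component above p and otherwise only moves
   it up to the join, which makes 1_p a central positive idempotent and u_a = 1_p. *)

lemma sum_mul_Pair: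
  "sum_mul phi mul (p, a) (q, b) = (sup p q, mul (sup p q) (phi p (sup p q) a) (phi q (sup p q) b))"
  by (simp add: sum_mul_def Let_def)

lemma sum_ld_Pair:
  "sum_ld phi psi ld (p, a) (q, b) = (sup p q, ld (sup p q) (phi p (sup p q) a) (psi q (sup p q) b))"
  by (simp add: sum_ld_def Let_def)

lemma sum_rd_Pair:
  "sum_rd phi psi rd (p, a) (q, b) = (sup p q, rd (sup p q) (psi p (sup p q) a) (phi q (sup p q) b))"
  by (simp add: sum_rd_def Let_def)

lemma sum_le_Pair:
  "sum_le phi psi le (p, a) (q, b) \<longleftrightarrow> le (sup p q) (phi p (sup p q) a) (psi q (sup p q) b)"
  by (simp add: sum_le_def Let_def)

lemma fst_sum_mul: "fst (sum_mul phi mul x y) = sup (fst x) (fst y)"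
  by (simp add: sum_mul_def Let_def)

lemma fst_sum_ld: "fst (sum_ld phi psi ld x y) = sup (fst x) (fst y)"
  by (simp add: sum_ld_def Let_def)

lemma fst_sum_rd: "fst (sum_rd phi psi rd x y) = sup (fst x) (fst y)"
  by (simp add: sum_rd_def Let_def)

lemma u_el_eqI:
  assumes antisym: "\<And>x y. x \<in> I' \<Longrightarrow> y \<in> I' \<Longrightarrow> le x y \<Longrightarrow> le y x \<Longrightarrow> x = y"
    and u: "is_u le mul I' a p"
  shows "u_el le mul I' a = p"
  unfolding u_el_def
proof (rule the_equality)
  show "is_u le mul I' a p" by (fact u)
next
  fix q assume "is_u le mul I' a q"
  with u show "q = p" using antisym unfolding is_u_def by blast
qed

locale residuated_semigroup_on =
  fixes A :: "'a set"
    and le :: "'a \<Rightarrow> 'a \<Rightarrow> bool"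
    and mul ld rd :: "'a \<Rightarrow> 'a \<Rightarrow> 'a"
  assumes residuated: "residuated_semigroup A le mul ld rd"
begin

lemma le_refl: "x \<in> A \<Longrightarrow> le x x"
  using residuated unfolding residuated_semigroup_def by (elim conjE) blast

lemma le_antisym: "x \<in> A \<Longrightarrow> y \<in> A \<Longrightarrow> le x y \<Longrightarrow> le y x \<Longrightarrow> x = y"
  using residuated unfolding residuated_semigroup_def by (elim conjE) blast

lemma le_trans: "x \<in> A \<Longrightarrow> y \<in> A \<Longrightarrow> z \<in> A \<Longrightarrow> le x y \<Longrightarrow> le y z \<Longrightarrow> le x z"
  using residuated unfolding residuated_semigroup_def by (elim conjE) blast

lemma mul_closed: "x \<in> A \<Longrightarrow> y \<in> A \<Longrightarrow> mul x y \<in> A"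
  and ld_closed: "x \<in> A \<Longrightarrow> y \<in> A \<Longrightarrow> ld x y \<in> A"
  and rd_closed: "x \<in> A \<Longrightarrow> y \<in> A \<Longrightarrow> rd x y \<in> A"
  using residuated unfolding residuated_semigroup_def by (elim conjE; blast)+

lemma mul_assoc: "x \<in> A \<Longrightarrow> y \<in> A \<Longrightarrow> z \<in> A \<Longrightarrow> mul (mul x y) z = mul x (mul y z)"
  using residuated unfolding residuated_semigroup_def by (elim conjE) blast

lemma residuation:
  "\<forall>x\<in>A. \<forall>y\<in>A. \<forall>z\<in>A. (le (mul x y) z \<longleftrightarrow> le x (rd z y)) \<and> (le (mul x y) z \<longleftrightarrow> le y (ld x z))"
  using residuated unfolding residuated_semigroup_def by (elim conjE)

lemma mul_le_iff_le_rd: "x \<in> A \<Longrightarrow> y \<in> A \<Longrightarrow> z \<in> A \<Longrightarrow> le (mul x y) z \<longleftrightarrow> le x (rd z y)"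
  and mul_le_iff_le_ld: "x \<in> A \<Longrightarrow> y \<in> A \<Longrightarrow> z \<in> A \<Longrightarrow> le (mul x y) z \<longleftrightarrow> le y (ld x z)"
  using residuation by blast+

lemma mul_mono_left:
  assumes "x \<in> A" "y \<in> A" "z \<in> A" "le x y"
  shows "le (mul x z) (mul y z)"
proof -
  have "le y (rd (mul y z) z)"
    using assms mul_le_iff_le_rd[of y z "mul y z"] by (simp add: mul_closed le_refl)
  then have "le x (rd (mul y z) z)"
    using assms le_trans by (meson mul_closed rd_closed)
  then show ?thesis
    using assms mul_le_iff_le_rd by (simp add: mul_closed)
qed

lemma mul_mono_right:
  assumes "x \<in> A" "y \<in> A" "z \<in> A" "le x y"
  shows "le (mul z x) (mul z y)"
proof -
  have "le y (ld z (mul z y))"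
    using assms mul_le_iff_le_ld[of z y "mul z y"] by (simp add: mul_closed le_refl)
  then have "le x (ld z (mul z y))"
    using assms le_trans by (meson mul_closed ld_closed)
  then show ?thesis
    using assms mul_le_iff_le_ld by (simp add: mul_closed)
qed

lemma le_ld_self_if_idempotent: "x \<in> A \<Longrightarrow> mul x x = x \<Longrightarrow> le x (ld x x)"
  using mul_le_iff_le_ld le_refl by metis

end

locale residuated_monoid_on = residuated_semigroup_on +
  fixes e :: 'a
  assumes identity: "global_identity A mul e"
begin

lemma one_closed: "e \<in> A"
  and mul_one_left: "x \<in> A \<Longrightarrow> mul e x = x"
  and mul_one_right: "x \<in> A \<Longrightarrow> mul x e = x"
  using identity unfolding global_identity_def by auto

lemma positive_el_iff_one_le:
  assumes x: "x \<in> A"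
  shows "positive_el A le mul x \<longleftrightarrow> le e x"
proof
  assume "positive_el A le mul x"
  then have "le e (mul x e)" using one_closed unfolding positive_el_def by blast
  then show "le e x" using x by (simp add: mul_one_right)
next
  assume "le e x"
  show "positive_el A le mul x"
    unfolding positive_el_def
  proof (intro ballI conjI)
    fix a assume a: "a \<in> A"
    show "le a (mul x a)"
      using mul_mono_left[OF one_closed x a \<open>le e x\<close>] a by (simp add: mul_one_left)
    show "le a (mul a x)"
      using mul_mono_right[OF one_closed x a \<open>le e x\<close>] a by (simp add: mul_one_right)
  qed
qed

lemma mul_self_le_if_le_one: "x \<in> A \<Longrightarrow> le x e \<Longrightarrow> le (mul x x) x"
  using mul_mono_right[of x e x] by (simp add: one_closed mul_one_right)

end

locale residuated_system =
  fixes car :: "'i::semilattice_sup \<Rightarrow> 'a set"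
    and le :: "'i \<Rightarrow> 'a \<Rightarrow> 'a \<Rightarrow> bool"
    and mul ld rd :: "'i \<Rightarrow> 'a \<Rightarrow> 'a \<Rightarrow> 'a"
    and one :: "'i \<Rightarrow> 'a"
    and phi psi :: "'i \<Rightarrow> 'i \<Rightarrow> 'a \<Rightarrow> 'a"
  assumes rm: "\<And>p. residuated_monoid (car p) (le p) (mul p) (ld p) (rd p) (one p)"
    and phi_into: "\<And>p q a. p \<le> q \<Longrightarrow> a \<in> car p \<Longrightarrow> phi p q a \<in> car q"
    and psi_into: "\<And>p q a. p \<le> q \<Longrightarrow> a \<in> car p \<Longrightarrow> psi p q a \<in> car q"
    and phi_mono: "\<And>p q a b. p \<le> q \<Longrightarrow> a \<in> car p \<Longrightarrow> b \<in> car p \<Longrightarrow> le p a b \<Longrightarrow>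
                     le q (phi p q a) (phi p q b)"
    and psi_mono: "\<And>p q a b. p \<le> q \<Longrightarrow> a \<in> car p \<Longrightarrow> b \<in> car p \<Longrightarrow> le p a b \<Longrightarrow>
                     le q (psi p q a) (psi p q b)"
    and phi_id: "\<And>p a. a \<in> car p \<Longrightarrow> phi p p a = a"
    and psi_id: "\<And>p a. a \<in> car p \<Longrightarrow> psi p p a = a"
    and phi_comp: "\<And>p q r a. p \<le> q \<Longrightarrow> q \<le> r \<Longrightarrow> a \<in> car p \<Longrightarrow>
                     phi q r (phi p q a) = phi p r a"
    and psi_comp: "\<And>p q r a. p \<le> q \<Longrightarrow> q \<le> r \<Longrightarrow> a \<in> car p \<Longrightarrow>
                     psi q r (psi p q a) = psi p r a"
    and phi_one: "\<And>p q. p \<le> q \<Longrightarrow> phi p q (one p) = one q"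
    and phi_mul: "\<And>p q a b. p \<le> q \<Longrightarrow> a \<in> car p \<Longrightarrow> b \<in> car p \<Longrightarrow>
                     phi p q (mul p a b) = mul q (phi p q a) (phi p q b)"
    and psi_ld: "\<And>p q a b. p \<le> q \<Longrightarrow> a \<in> car p \<Longrightarrow> b \<in> car p \<Longrightarrow>
                     psi p q (ld p a b) = ld q (phi p q a) (psi p q b)"
    and psi_rd: "\<And>p q a b. p \<le> q \<Longrightarrow> a \<in> car p \<Longrightarrow> b \<in> car p \<Longrightarrow>
                     psi p q (rd p a b) = rd q (psi p q a) (phi p q b)"
    and S1: "\<And>p q r t a. p < q \<Longrightarrow> p < r \<Longrightarrow> t = sup q r \<Longrightarrow> a \<in> car p \<Longrightarrow>
                     le t (phi q t (psi p q a)) (psi r t (phi p r a))"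
    and S2: "\<And>p q a b. p < q \<Longrightarrow> a \<in> car p \<Longrightarrow> b \<in> car p \<Longrightarrow>
                     le q (phi p q a) (psi p q b) \<Longrightarrow> le p a b \<and> a \<noteq> b"
begin

sublocale component: residuated_monoid_on "car p" "le p" "mul p" "ld p" "rd p" "one p" for p
  using rm[of p]
  by (simp add: residuated_monoid_def residuated_monoid_on_def residuated_monoid_on_axioms_def
      residuated_semigroup_on_def)

abbreviation "carrier_sum \<equiv> Sigma UNIV car"
abbreviation "mul_sum \<equiv> sum_mul phi mul"
abbreviation "ld_sum \<equiv> sum_ld phi psi ld"
abbreviation "rd_sum \<equiv> sum_rd phi psi rd"
abbreviation "le_sum \<equiv> sum_le phi psi le"
abbreviation "identities \<equiv> {(p, one p) | p. True}"

lemma phi_psi_le_psi_phi: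
  assumes "q \<le> r1" "q \<le> r2" "b \<in> car q"
  shows "le (sup r1 r2) (phi r1 (sup r1 r2) (psi q r1 b)) (psi r2 (sup r1 r2) (phi q r2 b))"
proof (cases "q = r1 \<or> q = r2")
  case True
  then show ?thesis
    using assms by (auto simp: sup_absorb1 sup_absorb2 phi_id psi_id phi_into psi_into component.le_refl)
next
  case False
  with assms have "q < r1" "q < r2" by (simp_all add: order.strict_iff_order)
  with S1 show ?thesis using assms(3) by blast
qed

lemma psi_le_phi: "p \<le> q \<Longrightarrow> a \<in> car p \<Longrightarrow> le q (psi p q a) (phi p q a)"
  using phi_psi_le_psi_phi[of p q q a] by (simp add: phi_id psi_id phi_into psi_into)

lemma le_if_phi_le_psi:
  "p \<le> q \<Longrightarrow> a \<in> car p \<Longrightarrow> b \<in> car p \<Longrightarrow> le q (phi p q a) (psi p q b) \<Longrightarrow> le p a b"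
  using S2[of p q a b] by (cases "p = q") (auto simp: phi_id psi_id)

lemma eq_if_phi_le_psi_self:
  "p \<le> q \<Longrightarrow> a \<in> car p \<Longrightarrow> le q (phi p q a) (psi p q a) \<Longrightarrow> p = q"
  using S2[of p q a a] by (auto simp: less_le)

lemma le_sum_refl: "a \<in> car p \<Longrightarrow> le_sum (p, a) (p, a)"
  by (simp add: sum_le_Pair phi_id psi_id component.le_refl)

lemma le_sum_antisym:
  assumes a: "a \<in> car p" and b: "b \<in> car q"
    and ab: "le_sum (p, a) (q, b)" and ba: "le_sum (q, b) (p, a)"
  shows "(p, a) = (q, b)"
proof -
  define r where "r = sup p q"
  have index_eq: "p' = r"
    if "p' \<le> r" "q' \<le> r" "a' \<in> car p'" "b' \<in> car q'"
      and "le r (phi p' r a') (psi q' r b')" "le r (phi q' r b') (psi p' r a')"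
    for p' q' a' b'
  proof -
    have "le r (phi p' r a') (phi q' r b')"
      using that psi_le_phi[of q' r b'] component.le_trans by (meson phi_into psi_into)
    then have "le r (phi p' r a') (psi p' r a')"
      using that component.le_trans by (meson phi_into psi_into)
    then show ?thesis using that eq_if_phi_le_psi_self by blast
  qed
  have ab': "le r (phi p r a) (psi q r b)" and ba': "le r (phi q r b) (psi p r a)"
    using ab ba by (simp_all add: sum_le_Pair r_def sup_commute)
  have "p = r" using index_eq[OF _ _ a b ab' ba'] by (simp add: r_def)
  moreover have "q = r" using index_eq[OF _ _ b a ba' ab'] by (simp add: r_def)
  ultimately show ?thesis
    using ab' ba' a b component.le_antisym by (simp add: phi_id psi_id)
qed

lemma le_sum_trans:
  assumes a: "a \<in> car p" and b: "b \<in> car q" and c: "c \<in> car s"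
    and ab: "le_sum (p, a) (q, b)" and bc: "le_sum (q, b) (s, c)"
  shows "le_sum (p, a) (s, c)"
proof -
  define r1 r2 r3 where "r1 = sup p q" and "r2 = sup q s" and "r3 = sup p s"
  define t where "t = sup r1 r2"
  have levels: "p \<le> r1" "q \<le> r1" "q \<le> r2" "s \<le> r2" "p \<le> r3" "s \<le> r3" "r1 \<le> t" "r2 \<le> t" "r3 \<le> t"
    unfolding r1_def r2_def r3_def t_def by (auto intro: le_supI1 le_supI2)
  have ab': "le r1 (phi p r1 a) (psi q r1 b)" using ab by (simp add: sum_le_Pair r1_def)
  have bc': "le r2 (phi q r2 b) (psi s r2 c)" using bc by (simp add: sum_le_Pair r2_def)
  have "le t (phi p t a) (phi r1 t (psi q r1 b))"
    using phi_mono[OF levels(7) _ _ ab'] levels a b phi_into psi_into phi_comp by metis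
  moreover have "le t (phi r1 t (psi q r1 b)) (psi r2 t (phi q r2 b))"
    using phi_psi_le_psi_phi[OF levels(2,3) b] by (simp add: t_def)
  moreover have "le t (psi r2 t (phi q r2 b)) (psi s t c)"
    using psi_mono[OF levels(8) _ _ bc'] levels b c phi_into psi_into psi_comp by metis
  ultimately have "le t (phi p t a) (psi s t c)"
    using levels a b c component.le_trans by (meson order_trans phi_into psi_into)
  then have "le t (phi r3 t (phi p r3 a)) (psi r3 t (psi s r3 c))"
    using levels a c by (simp add: phi_comp psi_comp)
  then have "le r3 (phi p r3 a) (psi s r3 c)"
    using le_if_phi_le_psi[OF levels(9)] levels a c by (simp add: phi_into psi_into)
  then show ?thesis by (simp add: sum_le_Pair r3_def)
qed

lemma mul_sum_assoc:
  assumes a: "a \<in> car p" and b: "b \<in> car q" and c: "c \<in> car s"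
  shows "mul_sum (mul_sum (p, a) (q, b)) (s, c) = mul_sum (p, a) (mul_sum (q, b) (s, c))"
proof -
  define t where "t = sup (sup p q) s"
  have levels: "p \<le> sup p q" "q \<le> sup p q" "sup p q \<le> t" "q \<le> sup q s" "s \<le> sup q s"
    "sup q s \<le> t" "p \<le> t" "q \<le> t" "s \<le> t"
    unfolding t_def by (auto intro: le_supI1 le_supI2)
  have "mul_sum (mul_sum (p, a) (q, b)) (s, c) = (t, mul t (mul t (phi p t a) (phi q t b)) (phi s t c))"
    using levels a b c by (simp add: sum_mul_Pair t_def[symmetric] phi_mul phi_into phi_comp)
  moreover have "mul_sum (p, a) (mul_sum (q, b) (s, c)) = (t, mul t (phi p t a) (mul t (phi q t b) (phi s t c)))"
    using levels a b c by (simp add: sum_mul_Pair sup_assoc[symmetric] t_def[symmetric] phi_mul phi_into phi_comp)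
  ultimately show ?thesis
    using levels a b c by (simp add: component.mul_assoc phi_into)
qed

lemma mul_sum_le_iff:
  assumes a: "a \<in> car p" and b: "b \<in> car q" and c: "c \<in> car s"
  shows mul_sum_le_iff_le_rd_sum: "le_sum (mul_sum (p, a) (q, b)) (s, c) \<longleftrightarrow> le_sum (p, a) (rd_sum (s, c) (q, b))"
    and mul_sum_le_iff_le_ld_sum: "le_sum (mul_sum (p, a) (q, b)) (s, c) \<longleftrightarrow> le_sum (q, b) (ld_sum (p, a) (s, c))"
proof -
  define t where "t = sup (sup p q) s"
  have levels: "p \<le> sup p q" "q \<le> sup p q" "sup p q \<le> t" "q \<le> sup s q" "s \<le> sup s q"
    "sup s q \<le> t" "p \<le> sup p s" "s \<le> sup p s" "sup p s \<le> t" "p \<le> t" "q \<le> t" "s \<le> t"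
    unfolding t_def by (auto intro: le_supI1 le_supI2)
  have joins: "sup p (sup s q) = t" "sup q (sup p s) = t"
    unfolding t_def by (simp_all add: sup_aci)
  have lhs: "le_sum (mul_sum (p, a) (q, b)) (s, c) \<longleftrightarrow> le t (mul t (phi p t a) (phi q t b)) (psi s t c)"
    using levels a b c by (simp add: sum_mul_Pair sum_le_Pair t_def[symmetric] phi_mul phi_into phi_comp)
  have rd_rhs: "le_sum (p, a) (rd_sum (s, c) (q, b)) \<longleftrightarrow> le t (phi p t a) (rd t (psi s t c) (phi q t b))"
    using levels a b c
    by (simp add: sum_rd_Pair sum_le_Pair joins psi_rd phi_into psi_into phi_comp psi_comp)
  have ld_rhs: "le_sum (q, b) (ld_sum (p, a) (s, c)) \<longleftrightarrow> le t (phi q t b) (ld t (phi p t a) (psi s t c))"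
    using levels a b c
    by (simp add: sum_ld_Pair sum_le_Pair joins psi_ld phi_into psi_into phi_comp psi_comp)
  have in_t: "phi p t a \<in> car t" "phi q t b \<in> car t" "psi s t c \<in> car t"
    using levels a b c by (simp_all add: phi_into psi_into)
  show "le_sum (mul_sum (p, a) (q, b)) (s, c) \<longleftrightarrow> le_sum (p, a) (rd_sum (s, c) (q, b))"
    unfolding lhs rd_rhs by (rule component.mul_le_iff_le_rd[OF in_t])
  show "le_sum (mul_sum (p, a) (q, b)) (s, c) \<longleftrightarrow> le_sum (q, b) (ld_sum (p, a) (s, c))"
    unfolding lhs ld_rhs by (rule component.mul_le_iff_le_ld[OF in_t])
qed

lemma mul_sum_closed: "x \<in> carrier_sum \<Longrightarrow> y \<in> carrier_sum \<Longrightarrow> mul_sum x y \<in> carrier_sum"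
  and ld_sum_closed: "x \<in> carrier_sum \<Longrightarrow> y \<in> carrier_sum \<Longrightarrow> ld_sum x y \<in> carrier_sum"
  and rd_sum_closed: "x \<in> carrier_sum \<Longrightarrow> y \<in> carrier_sum \<Longrightarrow> rd_sum x y \<in> carrier_sum"
  by (auto simp: sum_mul_Pair sum_ld_Pair sum_rd_Pair component.mul_closed component.ld_closed
      component.rd_closed phi_into psi_into)

lemma residuated_semigroup_sum: "residuated_semigroup carrier_sum le_sum mul_sum ld_sum rd_sum"
  unfolding residuated_semigroup_def
proof (intro conjI ballI impI)
  fix x y z assume "x \<in> carrier_sum" "y \<in> carrier_sum" "z \<in> carrier_sum"
  then obtain p a q b s c where x: "x = (p, a)" and a: "a \<in> car p"
    and y: "y = (q, b)" and b: "b \<in> car q" and z: "z = (s, c)" and c: "c \<in> car s"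
    by blast
  show "le_sum x x" unfolding x using a by (rule le_sum_refl)
  show "le_sum x y \<and> le_sum y x \<Longrightarrow> x = y"
    unfolding x y using le_sum_antisym[OF a b] by blast
  show "le_sum x y \<and> le_sum y z \<Longrightarrow> le_sum x z"
    unfolding x y z using le_sum_trans[OF a b c] by blast
  show "mul_sum x y \<in> carrier_sum" "ld_sum x y \<in> carrier_sum" "rd_sum x y \<in> carrier_sum"
    using \<open>x \<in> carrier_sum\<close> \<open>y \<in> carrier_sum\<close> by (simp_all add: mul_sum_closed ld_sum_closed rd_sum_closed)
  show "mul_sum (mul_sum x y) z = mul_sum x (mul_sum y z)"
    unfolding x y z by (rule mul_sum_assoc[OF a b c])
  show "le_sum (mul_sum x y) z \<longleftrightarrow> le_sum x (rd_sum z y)"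
    unfolding x y z by (rule mul_sum_le_iff_le_rd_sum[OF a b c])
  show "le_sum (mul_sum x y) z \<longleftrightarrow> le_sum y (ld_sum x z)"
    unfolding x y z by (rule mul_sum_le_iff_le_ld_sum[OF a b c])
qed

lemma global_identity_sum:
  assumes least: "\<And>p. least \<le> p"
  shows "global_identity carrier_sum mul_sum (least, one least)"
  unfolding global_identity_def
proof (intro conjI ballI)
  show "(least, one least) \<in> carrier_sum" by (simp add: component.one_closed)
  fix x assume "x \<in> carrier_sum"
  then obtain p a where x: "x = (p, a)" and a: "a \<in> car p" by auto
  have "sup least p = p" "sup p least = p" using least by (simp_all add: sup_absorb1 sup_absorb2)
  then show "mul_sum (least, one least) x = x" "mul_sum x (least, one least) = x"
    unfolding x using a least
    by (simp_all add: sum_mul_Pair phi_one phi_id component.mul_one_left component.mul_one_right)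
qed

lemma mul_sum_identities: "mul_sum (p, one p) (q, one q) = (sup p q, one (sup p q))"
  by (simp add: sum_mul_Pair phi_one component.mul_one_left component.one_closed)

lemma positive_el_sum:
  assumes e: "e \<in> car p" and one_le: "le p (one p) e"
  shows "positive_el carrier_sum le_sum mul_sum (p, e)"
  unfolding positive_el_def
proof (intro ballI conjI)
  fix y assume "y \<in> carrier_sum"
  then obtain q b where y: "y = (q, b)" and b: "b \<in> car q" by auto
  define r where "r = sup p q"
  have levels: "p \<le> r" "q \<le> r" and r_absorb: "sup q r = r" "sup r q = r"
    by (simp_all add: r_def sup_aci)
  have b_r: "phi q r b \<in> car r" and e_r: "phi p r e \<in> car r"
    using levels b e by (simp_all add: phi_into)
  have "le r (one r) (phi p r e)"
    using phi_mono[OF levels(1) component.one_closed e one_le] levels by (simp add: phi_one)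
  then have "positive_el (car r) (le r) (mul r) (phi p r e)"
    using e_r component.positive_el_iff_one_le by blast
  then have "le r (phi q r b) (mul r (phi p r e) (phi q r b))"
    and "le r (phi q r b) (mul r (phi q r b) (phi p r e))"
    using b_r unfolding positive_el_def by blast+
  then show "le_sum y (mul_sum (p, e) y)" and "le_sum y (mul_sum y (p, e))"
    unfolding y using b_r e_r
    by (simp_all add: sum_mul_Pair sum_le_Pair sup_commute[of q p] r_def[symmetric] r_absorb
        psi_id component.mul_closed)
qed

lemma cpi_el_identity: "cpi_el carrier_sum le_sum mul_sum (p, one p)"
  unfolding cpi_el_def central_el_def idempotent_el_def
proof (intro conjI ballI)
  show "(p, one p) \<in> carrier_sum" by (simp add: component.one_closed)
  show "positive_el carrier_sum le_sum mul_sum (p, one p)"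
    by (rule positive_el_sum) (simp_all add: component.one_closed component.le_refl)
  show "mul_sum (p, one p) (p, one p) = (p, one p)"
    by (simp add: mul_sum_identities)
  fix x assume "x \<in> carrier_sum"
  then show "mul_sum (p, one p) x = mul_sum x (p, one p)"
    by (auto simp: sum_mul_Pair sup_commute phi_one phi_into component.mul_one_left
        component.mul_one_right)
qed

lemma is_u_sum: "a \<in> car p \<Longrightarrow> is_u le_sum mul_sum identities (p, a) (p, one p)"
  unfolding is_u_def
proof (intro conjI ballI impI)
  assume a: "a \<in> car p"
  show "(p, one p) \<in> identities" by auto
  show "mul_sum (p, one p) (p, a) = (p, a)"
    using a by (simp add: sum_mul_Pair phi_id component.one_closed component.mul_one_left)
  fix x assume "x \<in> identities" and "mul_sum x (p, a) = (p, a)"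
  then obtain q where x: "x = (q, one q)" and "sup q p = p" by (auto simp: sum_mul_Pair)
  moreover have "q \<le> p" using \<open>sup q p = p\<close> by (simp add: sup.absorb_iff2)
  ultimately show "le_sum x (p, one p)"
    by (simp add: sum_le_Pair phi_one psi_id component.one_closed component.le_refl)
qed

lemma u_el_sum:
  assumes "x \<in> carrier_sum"
  shows "u_el le_sum mul_sum identities x = (fst x, one (fst x))"
proof (rule u_el_eqI)
  show "is_u le_sum mul_sum identities x (fst x, one (fst x))"
    using assms is_u_sum by auto
  show "\<And>y z. y \<in> identities \<Longrightarrow> z \<in> identities \<Longrightarrow> le_sum y z \<Longrightarrow> le_sum z y \<Longrightarrow> y = z"
    using le_sum_antisym component.one_closed by blast
qed

lemma steady_over_sum: "steady_over carrier_sum le_sum mul_sum ld_sum rd_sum identities"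
  unfolding steady_over_def balanced_over_def cpi_set_def
proof (intro conjI ballI)
  show "identities \<noteq> {}" by auto
  show "\<And>x. x \<in> identities \<Longrightarrow> cpi_el carrier_sum le_sum mul_sum x"
    using cpi_el_identity by auto
  show "\<And>x y. x \<in> identities \<Longrightarrow> y \<in> identities \<Longrightarrow> mul_sum x y \<in> identities"
    using mul_sum_identities by auto
  show "\<And>x. x \<in> carrier_sum \<Longrightarrow> \<exists>u. is_u le_sum mul_sum identities x u"
    using is_u_sum by auto
  fix x y assume x: "x \<in> carrier_sum" and y: "y \<in> carrier_sum"
  have units: "mul_sum (u_el le_sum mul_sum identities x) (u_el le_sum mul_sum identities y) =
      (sup (fst x) (fst y), one (sup (fst x) (fst y)))"
    using u_el_sum[OF x] u_el_sum[OF y] by (simp add: mul_sum_identities)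
  show "u_el le_sum mul_sum identities (mul_sum x y) =
      mul_sum (u_el le_sum mul_sum identities x) (u_el le_sum mul_sum identities y)"
    using u_el_sum[OF mul_sum_closed[OF x y]] units by (simp add: fst_sum_mul)
  show "u_el le_sum mul_sum identities (rd_sum x y) =
      mul_sum (u_el le_sum mul_sum identities x) (u_el le_sum mul_sum identities y)"
    using u_el_sum[OF rd_sum_closed[OF x y]] units by (simp add: fst_sum_rd)
  show "u_el le_sum mul_sum identities (ld_sum y x) =
      mul_sum (u_el le_sum mul_sum identities x) (u_el le_sum mul_sum identities y)"
    using u_el_sum[OF ld_sum_closed[OF y x]] units by (simp add: fst_sum_ld sup_commute)
qed

lemma balanced_rs_sum:
  assumes balanced: "\<And>p. balanced_rs (car p) (le p) (mul p) (ld p) (rd p)"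
  shows "balanced_rs carrier_sum le_sum mul_sum ld_sum rd_sum"
  unfolding balanced_rs_def
proof (intro ballI conjI)
  fix x assume "x \<in> carrier_sum"
  then obtain p a where x: "x = (p, a)" and a: "a \<in> car p" by auto
  have ld_x: "ld_sum x x = (p, ld p a a)" and rd_x: "rd_sum x x = (p, rd p a a)"
    unfolding x using a by (simp_all add: sum_ld_Pair sum_rd_Pair phi_id psi_id)
  have eq: "ld p a a = rd p a a" and pos: "positive_el (car p) (le p) (mul p) (ld p a a)"
    using balanced[of p] a unfolding balanced_rs_def by auto
  have "le p (one p) (ld p a a)"
    using pos a by (simp add: component.positive_el_iff_one_le component.ld_closed)
  then have "positive_el carrier_sum le_sum mul_sum (p, ld p a a)"
    using a by (simp add: positive_el_sum component.ld_closed)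
  then show "ld_sum x x = rd_sum x x"
    and "positive_el carrier_sum le_sum mul_sum (ld_sum x x)"
    and "positive_el carrier_sum le_sum mul_sum (rd_sum x x)"
    unfolding ld_x rd_x eq by simp_all
qed

lemma cpi_el_sum_eq_identities:
  assumes closed: "\<And>p. integrally_closed (car p) (ld p) (one p)"
  shows "{x. cpi_el carrier_sum le_sum mul_sum x} = identities"
proof
  show "identities \<subseteq> {x. cpi_el carrier_sum le_sum mul_sum x}"
    using cpi_el_identity by auto
  show "{x. cpi_el carrier_sum le_sum mul_sum x} \<subseteq> identities"
  proof
    fix x assume "x \<in> {x. cpi_el carrier_sum le_sum mul_sum x}"
    then have cpi: "cpi_el carrier_sum le_sum mul_sum x" by simp
    then obtain p a where x: "x = (p, a)" and a: "a \<in> car p" unfolding cpi_el_def by auto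
    have "le_sum (p, one p) (mul_sum x (p, one p))"
      using cpi component.one_closed unfolding cpi_el_def positive_el_def by auto
    then have one_le: "le p (one p) a"
      unfolding x using a
      by (simp add: sum_mul_Pair sum_le_Pair phi_id psi_id component.one_closed component.mul_one_right)
    have "mul p a a = a"
      using cpi a unfolding x cpi_el_def idempotent_el_def by (simp add: sum_mul_Pair phi_id)
    then have "le p a (one p)"
      using component.le_ld_self_if_idempotent[OF a] closed[of p] a unfolding integrally_closed_def by simp
    then have "a = one p" using one_le component.le_antisym a component.one_closed by blast
    then show "x \<in> identities" unfolding x by auto
  qed
qed

lemma mul_sum_self_le:
  assumes integral: "\<And>p. integral (car p) (le p) (one p)" and x: "x \<in> carrier_sum"
  shows "le_sum (mul_sum x x) x"
proof -
  obtain p a where x: "x = (p, a)" and a: "a \<in> car p" using x by auto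
  have "le p (mul p a a) a"
    using integral[of p] a component.mul_self_le_if_le_one unfolding integral_def by blast
  then show ?thesis
    unfolding x using a by (simp add: sum_mul_Pair sum_le_Pair phi_id psi_id component.mul_closed)
qed

end

theorem theorem6p14:
  fixes car :: "'i::semilattice_sup \<Rightarrow> 'a set"
    and le :: "'i \<Rightarrow> 'a \<Rightarrow> 'a \<Rightarrow> bool"
    and mul ld rd :: "'i \<Rightarrow> 'a \<Rightarrow> 'a \<Rightarrow> 'a"
    and one :: "'i \<Rightarrow> 'a"
    and phi psi :: "'i \<Rightarrow> 'i \<Rightarrow> 'a \<Rightarrow> 'a"
  defines "A \<equiv> Sigma UNIV car"
    and "M \<equiv> sum_mul phi mul"
    and "LD \<equiv> sum_ld phi psi ld"
    and "RD \<equiv> sum_rd phi psi rd"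
    and "LE \<equiv> sum_le phi psi le"
    and "I' \<equiv> {(p, one p) | p. True}"
  assumes rm: "\<And>p. residuated_monoid (car p) (le p) (mul p) (ld p) (rd p) (one p)"
    and phi_into: "\<And>p q a. p \<le> q \<Longrightarrow> a \<in> car p \<Longrightarrow> phi p q a \<in> car q"
    and psi_into: "\<And>p q a. p \<le> q \<Longrightarrow> a \<in> car p \<Longrightarrow> psi p q a \<in> car q"
    and phi_mono: "\<And>p q a b. p \<le> q \<Longrightarrow> a \<in> car p \<Longrightarrow> b \<in> car p \<Longrightarrow> le p a b \<Longrightarrow>
                     le q (phi p q a) (phi p q b)"
    and psi_mono: "\<And>p q a b. p \<le> q \<Longrightarrow> a \<in> car p \<Longrightarrow> b \<in> car p \<Longrightarrow> le p a b \<Longrightarrow>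
                     le q (psi p q a) (psi p q b)"
    and phi_id: "\<And>p a. a \<in> car p \<Longrightarrow> phi p p a = a"
    and psi_id: "\<And>p a. a \<in> car p \<Longrightarrow> psi p p a = a"
    and phi_comp: "\<And>p q r a. p \<le> q \<Longrightarrow> q \<le> r \<Longrightarrow> a \<in> car p \<Longrightarrow>
                     phi q r (phi p q a) = phi p r a"
    and psi_comp: "\<And>p q r a. p \<le> q \<Longrightarrow> q \<le> r \<Longrightarrow> a \<in> car p \<Longrightarrow>
                     psi q r (psi p q a) = psi p r a"
    and phi_one: "\<And>p q. p \<le> q \<Longrightarrow> phi p q (one p) = one q"
    and phi_mul: "\<And>p q a b. p \<le> q \<Longrightarrow> a \<in> car p \<Longrightarrow> b \<in> car p \<Longrightarrow>
                     phi p q (mul p a b) = mul q (phi p q a) (phi p q b)"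
    and psi_ld: "\<And>p q a b. p \<le> q \<Longrightarrow> a \<in> car p \<Longrightarrow> b \<in> car p \<Longrightarrow>
                     psi p q (ld p a b) = ld q (phi p q a) (psi p q b)"
    and psi_rd: "\<And>p q a b. p \<le> q \<Longrightarrow> a \<in> car p \<Longrightarrow> b \<in> car p \<Longrightarrow>
                     psi p q (rd p a b) = rd q (psi p q a) (phi p q b)"
    and S1: "\<And>p q r t a. p < q \<Longrightarrow> p < r \<Longrightarrow> t = sup q r \<Longrightarrow> a \<in> car p \<Longrightarrow>
                     le t (phi q t (psi p q a)) (psi r t (phi p r a))"
    and S2: "\<And>p q a b. p < q \<Longrightarrow> a \<in> car p \<Longrightarrow> b \<in> car p \<Longrightarrow>
                     le q (phi p q a) (psi p q b) \<Longrightarrow> le p a b \<and> a \<noteq> b"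
  shows "residuated_semigroup A LE M LD RD
       \<and> (\<forall>bot. (\<forall>p. bot \<le> p) \<longrightarrow> global_identity A M (bot, one bot))
       \<and> (\<forall>p. cpi_el A LE M (p, one p))
       \<and> (\<forall>p q. M (p, one p) (q, one q) = (sup p q, one (sup p q)))
       \<and> (\<forall>x\<in>I'. \<forall>y\<in>I'. M x y \<in> I')
       \<and> bij_betw (\<lambda>p. (p, one p)) UNIV I'
       \<and> steady_over A LE M LD RD I'
       \<and> (\<forall>a\<in>A. u_el LE M I' a = (fst a, one (fst a)))
       \<and> ((\<forall>p. balanced_rs (car p) (le p) (mul p) (ld p) (rd p)) \<longrightarrow> balanced_rs A LE M LD RD)
       \<and> ((\<forall>p. integrally_closed (car p) (ld p) (one p)) \<longrightarrow> {x. cpi_el A LE M x} = I')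
       \<and> ((\<forall>p. integral (car p) (le p) (one p)) \<longrightarrow> (\<forall>x\<in>A. LE (M x x) x))"
proof -
  interpret residuated_system car le mul ld rd one phi psi
    by (rule residuated_system.intro)
      (fact rm phi_into psi_into phi_mono psi_mono phi_id psi_id phi_comp psi_comp phi_one
        phi_mul psi_ld psi_rd S1 S2)+
  have "bij_betw (\<lambda>p. (p, one p)) UNIV identities"
    by (auto simp: bij_betw_def inj_on_def)
  then show ?thesis
    unfolding assms(1-6)
    using residuated_semigroup_sum global_identity_sum cpi_el_identity mul_sum_identities
      steady_over_sum u_el_sum balanced_rs_sum cpi_el_sum_eq_identities mul_sum_self_le
    by (intro conjI allI ballI impI) auto
qed

end
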